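(* Let $\widetilde{A}$ be a $\Lambda$-standard weight algebra over the DVR $\mathcal{O}$, let $\widetilde{N}$ be an $\widetilde{A}$-lattice, $\lambda\in\Lambda$ and $v\in\widetilde{N}_\lambda$. (a) $v$ is $\lambda$-primitive if and only if $v\notin\widetilde{N}\cap\widetilde{N}'_K(\lambda)$ and $\mathcal{O}v+(\widetilde{N}\cap\widetilde{N}'_K(\lambda))$ is $\mathcal{O}$-pure in $\widetilde{N}$. (b) $v$ is strongly $\lambda$-primitive if and only if there is a non-negative integer $i$ such that $v\in\widetilde{\operatorname{rad}}^i\widetilde{N}$, $v\notin\widetilde{N}\cap(\operatorname{rad}^{i+1}\widetilde{N}_K+\widetilde{N}'_K(\lambda))$, and $\mathcal{O}v+\widetilde{N}\cap(\operatorname{rad}^{i+1}\widetilde{N}_K+\widetilde{N}'_K(\lambda))$ is $\mathcal{O}$-pure in $\widetilde{N}$. (c) If $v$ is strongly $\lambda$-primitive, it is $\lambda$-primitive.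
   Context: $\mathcal{O}$ is a DVR with fraction field $K$ and residue field $k$. $\widetilde{A}$ is an $\mathcal{O}$-free finite $\mathcal{O}$-algebra with orthogonal idempotents $e_\nu$ ($\nu\in X$) summing to $1$ making it a $\Lambda$-standard weight algebra: for $\Lambda\subseteq X$ partially ordered, the irreducible $\widetilde{A}_K$-modules $L_K(\lambda)$ and $\widetilde{A}_k$-modules $L(\lambda)$ are both indexed by $\Lambda$, with $\dim e_\lambda L_K(\lambda)=\dim e_\lambda L(\lambda)=1$ and, for $\mu\in\Lambda$, $e_\mu L_K(\lambda)\ne0$ or $e_\mu L(\lambda)\neq0$ implies $\mu\le\lambda$. For a module $M$, $M_\nu=e_\nu M$. An $\widetilde{A}$-lattice is $\mathcal{O}$-finite and torsion-free; a submodule $\widetilde{S}\subseteq\widetilde{M}$ is pure if $\widetilde{M}/\widetilde{S}$ is torsion-free. $\operatorname{rad}^i\widetilde{N}_K=(\operatorname{rad}\widetilde{A}_K)^i\widetilde{N}_K$, $\widetilde{\operatorname{rad}}^i\widetilde{N}=\widetilde{N}\cap\operatorname{rad}^i\widetilde{N}_K$, $\operatorname{gr}\widetilde{N}=\bigoplus_i\widetilde{\operatorname{rad}}^i\widetilde{N}/\widetilde{\operatorname{rad}}^{i+1}\widetilde{N}$. $\widetilde{N}'_K(\lambda)$ is the $\widetilde{A}_K$-submodule of $\widetilde{N}_K$ generated by all $\mu$-weight vectors with $\mu\in\Lambda$, $\mu>\lambda$. $v\in\widetilde{N}_\lambda$ is $\lambda$-primitive if the image of $\mathcal{O}v$ in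 $\widetilde{N}/(\widetilde{N}\cap\widetilde{N}'_K(\lambda))$ is nonzero and pure. $v$ is strongly $\lambda$-primitive if for some $i\ge0$ with $v\in\widetilde{\operatorname{rad}}^i\widetilde{N}$, its class $[v]\in(\operatorname{gr}\widetilde{N})_i$ has the property that the image of $\mathcal{O}[v]$ in $\operatorname{gr}(\widetilde{N}/(\widetilde{N}\cap\widetilde{N}'_K(\lambda)))$ (under the natural map) is nonzero and pure. *)

theory Defs
  imports "HOL-Computational_Algebra.Fraction_Field"
begin

definition is_DVR :: "'o::idom itself \<Rightarrow> bool" where
  "is_DVR _ \<longleftrightarrow> (\<exists>p::'o. p \<noteq> 0 \<and> \<not> p dvd 1 \<and>
      (\<forall>x::'o. x \<noteq> 0 \<longrightarrow> (\<exists>u n. u dvd 1 \<and> x = u * p ^ n)))"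

definition ofO :: "'o::idom \<Rightarrow> 'o fract" where
  "ofO x = Fract x 1"

(* A_K (the type 'a) is a K-algebra via the central ring homomorphism kap *)
definition K_algebra :: "('o::idom fract \<Rightarrow> 'a::ring_1) \<Rightarrow> bool" where
  "K_algebra kap \<longleftrightarrow> kap 1 = 1 \<and> (\<forall>x y. kap (x + y) = kap x + kap y) \<and>
      (\<forall>x y. kap (x * y) = kap x * kap y) \<and> (\<forall>c a. kap c * a = a * kap c)"

(* A (the set Aset) is an O-subalgebra of A_K, O-free of finite rank on a basis b
   which is a K-basis of A_K, i.e. A_K = K \<otimes>_O A *)
definition O_order :: "('o::idom fract \<Rightarrow> 'a::ring_1) \<Rightarrow> 'a set \<Rightarrow> bool" where
  "O_order kap A \<longleftrightarrow> 1 \<in> A \<and> (\<forall>x\<in>A. \<forall>y\<in>A. x + y \<in> A \<and> x * y \<in> A \<and> - x \<in> A) \<and>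
     (\<exists>b::'a list. set b \<subseteq> A \<and>
        A = {\<Sum>i<length b. kap (ofO (os ! i)) * b ! i | os. length os = length b} \<and>
        (\<forall>x. \<exists>!cs. length cs = length b \<and> x = (\<Sum>i<length b. kap (cs ! i) * b ! i)))"

definition idem_decomp :: "'x set \<Rightarrow> ('x \<Rightarrow> 'a::ring_1) \<Rightarrow> 'a set \<Rightarrow> bool" where
  "idem_decomp X e A \<longleftrightarrow> (\<forall>\<nu>\<in>X. e \<nu> \<in> A) \<and>
     (\<forall>\<nu>\<in>X. \<forall>\<mu>\<in>X. e \<nu> * e \<mu> = (if \<nu> = \<mu> then e \<nu> else 0)) \<and>
     finite {\<nu>\<in>X. e \<nu> \<noteq> 0} \<and> sum e {\<nu>\<in>X. e \<nu> \<noteq> 0} = 1"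

definition is_module :: "'r::ring_1 set \<Rightarrow> ('r \<Rightarrow> 'm::ab_group_add \<Rightarrow> 'm) \<Rightarrow> 'm set \<Rightarrow> bool" where
  "is_module R act M \<longleftrightarrow> 0 \<in> M \<and> (\<forall>x\<in>M. \<forall>y\<in>M. x + y \<in> M \<and> - x \<in> M) \<and>
     (\<forall>r\<in>R. \<forall>x\<in>M. act r x \<in> M) \<and>
     (\<forall>r\<in>R. \<forall>x\<in>M. \<forall>y\<in>M. act r (x + y) = act r x + act r y) \<and>
     (\<forall>r\<in>R. \<forall>s\<in>R. \<forall>x\<in>M. act (r + s) x = act r x + act s x \<and> act (r * s) x = act r (act s x)) \<and>
     (\<forall>x\<in>M. act 1 x = x)"

definition is_submodule :: "'r::ring_1 set \<Rightarrow> ('r \<Rightarrow> 'm::ab_group_add \<Rightarrow> 'm) \<Rightarrow> 'm set \<Rightarrow> 'm set \<Rightarrow> bool" where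
  "is_submodule R act M S \<longleftrightarrow> S \<subseteq> M \<and> 0 \<in> S \<and> (\<forall>x\<in>S. \<forall>y\<in>S. x + y \<in> S \<and> - x \<in> S) \<and>
     (\<forall>r\<in>R. \<forall>x\<in>S. act r x \<in> S)"

definition simple_module :: "'r::ring_1 set \<Rightarrow> ('r \<Rightarrow> 'm::ab_group_add \<Rightarrow> 'm) \<Rightarrow> 'm set \<Rightarrow> bool" where
  "simple_module R act M \<longleftrightarrow> is_module R act M \<and> M \<noteq> {0} \<and>
     (\<forall>S. is_submodule R act M S \<longrightarrow> S = {0} \<or> S = M)"

definition mod_iso :: "'r::ring_1 set \<Rightarrow> ('r \<Rightarrow> 'm::ab_group_add \<Rightarrow> 'm) \<Rightarrow> 'm set
    \<Rightarrow> ('r \<Rightarrow> 'n::ab_group_add \<Rightarrow> 'n) \<Rightarrow> 'n set \<Rightarrow> bool" where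
  "mod_iso R act1 M1 act2 M2 \<longleftrightarrow> (\<exists>f. bij_betw f M1 M2 \<and> (\<forall>x\<in>M1. \<forall>y\<in>M1. f (x + y) = f x + f y) \<and>
     (\<forall>r\<in>R. \<forall>x\<in>M1. f (act1 r x) = act2 r (f x)))"

definition left_ideal :: "'r::ring_1 set \<Rightarrow> 'r set \<Rightarrow> bool" where
  "left_ideal R I \<longleftrightarrow> I \<subseteq> R \<and> 0 \<in> I \<and> (\<forall>x\<in>I. \<forall>y\<in>I. x + y \<in> I) \<and> (\<forall>r\<in>R. \<forall>x\<in>I. r * x \<in> I)"

definition max_left_ideal :: "'r::ring_1 set \<Rightarrow> 'r set \<Rightarrow> bool" where
  "max_left_ideal R I \<longleftrightarrow> left_ideal R I \<and> I \<noteq> R \<and>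
     (\<forall>J. left_ideal R J \<and> I \<subseteq> J \<longrightarrow> J = I \<or> J = R)"

definition jac :: "'r::ring_1 set \<Rightarrow> 'r set" where
  "jac R = {x\<in>R. \<forall>I. max_left_ideal R I \<longrightarrow> x \<in> I}"

definition wsp :: "('a \<Rightarrow> 'm \<Rightarrow> 'm) \<Rightarrow> ('x \<Rightarrow> 'a) \<Rightarrow> 'm set \<Rightarrow> 'x \<Rightarrow> 'm set" where
  "wsp act e M \<nu> = act (e \<nu>) ` M"

(* A-modules on which the maximal ideal of O acts by zero = A_k-modules *)
definition kmod :: "('o::idom fract \<Rightarrow> 'a::ring_1) \<Rightarrow> 'a set \<Rightarrow> ('a \<Rightarrow> 'm::ab_group_add \<Rightarrow> 'm) \<Rightarrow> 'm set \<Rightarrow> bool" where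
  "kmod kap A act M \<longleftrightarrow> is_module A act M \<and>
     (\<forall>c0::'o. \<not> c0 dvd 1 \<longrightarrow> (\<forall>x\<in>M. act (kap (ofO c0)) x = 0))"

definition std_weight_alg ::
  "('o::idom fract \<Rightarrow> 'a::ring_1) \<Rightarrow> 'a set \<Rightarrow> 'x set \<Rightarrow> ('x \<Rightarrow> 'a) \<Rightarrow> 'x set \<Rightarrow> ('x \<Rightarrow> 'x \<Rightarrow> bool)
   \<Rightarrow> ('x \<Rightarrow> 'l1::ab_group_add set) \<Rightarrow> ('x \<Rightarrow> 'a \<Rightarrow> 'l1 \<Rightarrow> 'l1)
   \<Rightarrow> ('x \<Rightarrow> 'l2::ab_group_add set) \<Rightarrow> ('x \<Rightarrow> 'a \<Rightarrow> 'l2 \<Rightarrow> 'l2) \<Rightarrow> bool" where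
  "std_weight_alg kap A X e Lam le LK actK L actk \<longleftrightarrow>
     K_algebra kap \<and> O_order kap A \<and> idem_decomp X e A \<and> Lam \<subseteq> X \<and>
     (\<forall>lam\<in>Lam. le lam lam) \<and> (\<forall>lam\<in>Lam. \<forall>\<mu>\<in>Lam. le lam \<mu> \<and> le \<mu> lam \<longrightarrow> lam = \<mu>) \<and>
     (\<forall>lam\<in>Lam. \<forall>\<mu>\<in>Lam. \<forall>\<nu>\<in>Lam. le lam \<mu> \<and> le \<mu> \<nu> \<longrightarrow> le lam \<nu>) \<and>
     \<comment> \<open>irreducible A_K-modules L_K(lambda)\<close>
     (\<forall>lam\<in>Lam. simple_module UNIV (actK lam) (LK lam)) \<and>
     (\<forall>lam\<in>Lam. \<forall>\<mu>\<in>Lam. lam \<noteq> \<mu> \<longrightarrow> \<not> mod_iso UNIV (actK lam) (LK lam) (actK \<mu>) (LK \<mu>)) \<and>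
     (\<forall>I. max_left_ideal UNIV I \<longrightarrow> (\<exists>lam\<in>Lam. \<exists>w\<in>LK lam. {a. actK lam a w = 0} = I)) \<and>
     (\<forall>lam\<in>Lam. \<exists>w\<in>wsp (actK lam) e (LK lam) lam. w \<noteq> 0 \<and>
         (\<forall>u\<in>wsp (actK lam) e (LK lam) lam. \<exists>c. u = actK lam (kap c) w)) \<and>
     (\<forall>lam\<in>Lam. \<forall>\<mu>\<in>Lam. wsp (actK lam) e (LK lam) \<mu> \<noteq> {0} \<longrightarrow> le \<mu> lam) \<and>
     \<comment> \<open>irreducible A_k-modules L(lambda)\<close>
     (\<forall>lam\<in>Lam. kmod kap A (actk lam) (L lam) \<and> simple_module A (actk lam) (L lam)) \<and>
     (\<forall>lam\<in>Lam. \<forall>\<mu>\<in>Lam. lam \<noteq> \<mu> \<longrightarrow> \<not> mod_iso A (actk lam) (L lam) (actk \<mu>) (L \<mu>)) \<and>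
     (\<forall>I. max_left_ideal A I \<and> (\<forall>c0::'o. \<not> c0 dvd 1 \<longrightarrow> (\<forall>x\<in>A. kap (ofO c0) * x \<in> I)) \<longrightarrow>
         (\<exists>lam\<in>Lam. \<exists>w\<in>L lam. {a\<in>A. actk lam a w = 0} = I)) \<and>
     (\<forall>lam\<in>Lam. \<exists>w\<in>wsp (actk lam) e (L lam) lam. w \<noteq> 0 \<and>
         (\<forall>u\<in>wsp (actk lam) e (L lam) lam. \<exists>c0::'o. u = actk lam (kap (ofO c0)) w)) \<and>
     (\<forall>lam\<in>Lam. \<forall>\<mu>\<in>Lam. wsp (actk lam) e (L lam) \<mu> \<noteq> {0} \<longrightarrow> le \<mu> lam)"

definition smO :: "('o::idom fract \<Rightarrow> 'a) \<Rightarrow> ('a \<Rightarrow> 'm \<Rightarrow> 'm) \<Rightarrow> 'o \<Rightarrow> 'm \<Rightarrow> 'm" where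
  "smO kap act c0 x = act (kap (ofO c0)) x"

(* An A-lattice N, realised inside N_K = K \<otimes>_O N (the set VK with A_K-action act) *)
definition A_lattice :: "('o::idom fract \<Rightarrow> 'a::ring_1) \<Rightarrow> 'a set \<Rightarrow> ('a \<Rightarrow> 'm::ab_group_add \<Rightarrow> 'm)
    \<Rightarrow> 'm set \<Rightarrow> 'm set \<Rightarrow> bool" where
  "A_lattice kap A act VK N \<longleftrightarrow> is_module UNIV act VK \<and> is_module A act N \<and> N \<subseteq> VK \<and>
     (\<exists>G. finite G \<and> G \<subseteq> N \<and> N = {\<Sum>g\<in>G. smO kap act (f g) g | f. True}) \<and>
     VK = {act (kap c) x | c x. x \<in> N}"

inductive_set gspan :: "('m \<Rightarrow> 'm \<Rightarrow> 'm) \<Rightarrow> 'm \<Rightarrow> 'm set \<Rightarrow> 'm set" for pl z S where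
  gspan_zero: "z \<in> gspan pl z S"
| gspan_gen: "s \<in> S \<Longrightarrow> s \<in> gspan pl z S"
| gspan_plus: "x \<in> gspan pl z S \<Longrightarrow> y \<in> gspan pl z S \<Longrightarrow> pl x y \<in> gspan pl z S"

fun radpow :: "('m \<Rightarrow> 'm \<Rightarrow> 'm) \<Rightarrow> 'm \<Rightarrow> ('a \<Rightarrow> 'm \<Rightarrow> 'm) \<Rightarrow> 'a set \<Rightarrow> 'm set \<Rightarrow> nat \<Rightarrow> 'm set" where
  "radpow pl z act J M 0 = M"
| "radpow pl z act J M (Suc i) = gspan pl z {act j m | j m. j \<in> J \<and> m \<in> radpow pl z act J M i}"

definition setplus :: "('m \<Rightarrow> 'm \<Rightarrow> 'm) \<Rightarrow> 'm set \<Rightarrow> 'm set \<Rightarrow> 'm set" where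
  "setplus pl P Q = {pl p q | p q. p \<in> P \<and> q \<in> Q}"

definition coset :: "('m \<Rightarrow> 'm \<Rightarrow> 'm) \<Rightarrow> 'm \<Rightarrow> 'm set \<Rightarrow> 'm set" where
  "coset pl x T = {pl x t | t. t \<in> T}"

definition quot :: "('m \<Rightarrow> 'm \<Rightarrow> 'm) \<Rightarrow> 'm set \<Rightarrow> 'm set \<Rightarrow> 'm set set" where
  "quot pl M T = (\<lambda>x. coset pl x T) ` M"

definition qmap :: "('m \<Rightarrow> 'm \<Rightarrow> 'm) \<Rightarrow> 'm set \<Rightarrow> ('m \<Rightarrow> 'm) \<Rightarrow> 'm set \<Rightarrow> 'm set" where
  "qmap pl T g C = {pl (g c) t | c t. c \<in> C \<and> t \<in> T}"

definition pure_in :: "('o::zero \<Rightarrow> 'q \<Rightarrow> 'q) \<Rightarrow> 'q set \<Rightarrow> 'q set \<Rightarrow> bool" where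
  "pure_in sm M P \<longleftrightarrow> (\<forall>c0. c0 \<noteq> 0 \<longrightarrow> (\<forall>x\<in>M. sm c0 x \<in> P \<longrightarrow> x \<in> P))"

definition Nprime :: "('x \<Rightarrow> 'a::ring_1) \<Rightarrow> 'x set \<Rightarrow> ('x \<Rightarrow> 'x \<Rightarrow> bool) \<Rightarrow> ('a \<Rightarrow> 'm::ab_group_add \<Rightarrow> 'm)
    \<Rightarrow> 'm set \<Rightarrow> 'x \<Rightarrow> 'm set" where
  "Nprime e Lam le act VK lam =
     gspan (+) 0 {act a w | a w. \<exists>\<mu>\<in>Lam. le lam \<mu> \<and> \<mu> \<noteq> lam \<and> w \<in> wsp act e VK \<mu>}"

definition radK :: "('a::ring_1 \<Rightarrow> 'm::ab_group_add \<Rightarrow> 'm) \<Rightarrow> 'm set \<Rightarrow> nat \<Rightarrow> 'm set" where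
  "radK act VK i = radpow (+) 0 act (jac UNIV) VK i"

(* lambda-primitive: image of Ov in N/(N \<inter> N'_K(lambda)) is nonzero and pure *)
definition primitive ::
  "('o::idom fract \<Rightarrow> 'a::ring_1) \<Rightarrow> ('x \<Rightarrow> 'a) \<Rightarrow> 'x set \<Rightarrow> ('x \<Rightarrow> 'x \<Rightarrow> bool)
   \<Rightarrow> ('a \<Rightarrow> 'm::ab_group_add \<Rightarrow> 'm) \<Rightarrow> 'm set \<Rightarrow> 'm set \<Rightarrow> 'x \<Rightarrow> 'm \<Rightarrow> bool" where
  "primitive kap e Lam le act VK N lam v \<longleftrightarrow> v \<in> wsp act e N lam \<and>
     (let S = N \<inter> Nprime e Lam le act VK lam;
          img = {coset (+) (smO kap act c0 v) S | c0. True}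
      in img \<noteq> {coset (+) 0 S} \<and>
         pure_in (\<lambda>c0. qmap (+) S (smO kap act c0)) (quot (+) N S) img)"

(* strongly lambda-primitive.  The lattice N/(N \<inter> N'_K(lambda)) is realised inside its
   K-span N_K/N'_K(lambda) as cosets of N'_K(lambda); its radical filtration is computed there. *)
definition strongly_primitive ::
  "('o::idom fract \<Rightarrow> 'a::ring_1) \<Rightarrow> ('x \<Rightarrow> 'a) \<Rightarrow> 'x set \<Rightarrow> ('x \<Rightarrow> 'x \<Rightarrow> bool)
   \<Rightarrow> ('a \<Rightarrow> 'm::ab_group_add \<Rightarrow> 'm) \<Rightarrow> 'm set \<Rightarrow> 'm set \<Rightarrow> 'x \<Rightarrow> 'm \<Rightarrow> bool" where
  "strongly_primitive kap e Lam le act VK N lam v \<longleftrightarrow> v \<in> wsp act e N lam \<and>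
     (let NP = Nprime e Lam le act VK lam;
          plQ = setplus (+);
          actQ = (\<lambda>a. qmap (+) NP (act a));
          smQ = (\<lambda>c0. qmap (+) NP (smO kap act c0));
          QK = quot (+) VK NP;
          Q = quot (+) N NP;
          radtQ = (\<lambda>j. Q \<inter> radpow plQ NP actQ (jac UNIV) QK j)
      in \<exists>i. v \<in> N \<inter> radK act VK i \<and>
          (let T = radtQ (Suc i);
               grQ = quot plQ (radtQ i) T;
               img = {coset plQ (smQ c0 (coset (+) v NP)) T | c0. True}
           in img \<noteq> {coset plQ NP T} \<and>
              pure_in (\<lambda>c0. qmap plQ T (smQ c0)) grQ img))"

end

theory Submission
  imports Defs
begin

text \<open>
  Everything rests on one elementary observation: if \<open>\<phi> : M \<rightarrow> M/W\<close> is the quotient map by an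
  \<open>\<O>\<close>-submodule \<open>W\<close>, then the image of \<open>\<O>v\<close> is nonzero iff \<open>v \<notin> W\<close>, and it is pure in
  \<open>\<phi>(D)\<close> iff \<open>\<O>v + W\<close> is pure in \<open>D\<close>. Part (a) is this with \<open>W = N \<inter> N'\<^sub>K(\<lambda>)\<close>.
  For (b), the radical filtration of \<open>N\<^sub>K/N'\<^sub>K(\<lambda>)\<close> is the image of that of \<open>N\<^sub>K\<close>, so the
  \<open>i\<close>-th graded piece of \<open>N/(N \<inter> N'\<^sub>K(\<lambda>))\<close> is \<open>D/W\<close> with
  \<open>D = N \<inter> (rad\<^sup>i N\<^sub>K + N'\<^sub>K(\<lambda>))\<close> and \<open>W = N \<inter> (rad\<^sup>i\<^sup>+\<^sup>1 N\<^sub>K + N'\<^sub>K(\<lambda>))\<close>; as the trace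
  of a \<open>K\<close>-subspace, \<open>D\<close> is pure in \<open>N\<close>, so purity in \<open>D\<close> and in \<open>N\<close> agree.
  For (c), let \<open>V \<supseteq> N'\<^sub>K(\<lambda>)\<close> be a \<open>K\<close>-subspace with \<open>v \<notin> V\<close>: if \<open>c x = d'v + s\<close> with
  \<open>s \<in> N \<inter> N'\<^sub>K(\<lambda>)\<close>, purity of \<open>\<O>v + N \<inter> V\<close> gives \<open>x = dv + w\<close> with \<open>w \<in> N \<inter> V\<close>, and
  since \<open>v \<notin> V\<close> the coefficients of \<open>v\<close> must agree, whence \<open>c w = s\<close> and \<open>w \<in> N'\<^sub>K(\<lambda>)\<close>.
\<close>

section \<open>Cosets and quotient maps\<close>

lemma coset_zero: "coset (+) 0 P = (P :: 'b::monoid_add set)"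
  unfolding coset_def by auto

lemma mem_coset: "y \<in> coset pl x T \<longleftrightarrow> (\<exists>t\<in>T. y = pl x t)"
  unfolding coset_def by blast

lemma coset_eq_image: "coset pl x T = pl x ` T"
  unfolding coset_def by blast

lemma mem_setplus: "z \<in> setplus pl P Q \<longleftrightarrow> (\<exists>p\<in>P. \<exists>q\<in>Q. z = pl p q)"
  unfolding setplus_def by blast

lemma mem_qmap: "y \<in> qmap pl T g C \<longleftrightarrow> (\<exists>c\<in>C. \<exists>t\<in>T. y = pl (g c) t)"
  unfolding qmap_def by blast

lemma subset_setplus_zero: "0 \<in> R \<Longrightarrow> P \<subseteq> setplus (+) R (P :: 'b::monoid_add set)"
  unfolding setplus_def by force

lemma gspan_subset:
  assumes "z \<in> P" "\<And>x y. x \<in> P \<Longrightarrow> y \<in> P \<Longrightarrow> pl x y \<in> P" "G \<subseteq> P"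
  shows "gspan pl z G \<subseteq> P"
proof
  fix x assume "x \<in> gspan pl z G"
  then show "x \<in> P" by induct (use assms in auto)
qed

definition add_subgroup :: "'b::ab_group_add set \<Rightarrow> bool" where
  "add_subgroup S \<longleftrightarrow> 0 \<in> S \<and> (\<forall>x\<in>S. \<forall>y\<in>S. x + y \<in> S) \<and> (\<forall>x\<in>S. - x \<in> S)"

lemma add_subgroupD:
  assumes "add_subgroup S"
  shows "0 \<in> S" "\<And>x y. x \<in> S \<Longrightarrow> y \<in> S \<Longrightarrow> x + y \<in> S" "\<And>x. x \<in> S \<Longrightarrow> - x \<in> S"
  using assms by (auto simp: add_subgroup_def)

lemma add_subgroup_diff: "add_subgroup S \<Longrightarrow> x \<in> S \<Longrightarrow> y \<in> S \<Longrightarrow> x - y \<in> S"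
  using add_subgroupD(2)[of S x "- y"] add_subgroupD(3)[of S y] by simp

lemma add_subgroup_Int: "add_subgroup S \<Longrightarrow> add_subgroup T \<Longrightarrow> add_subgroup (S \<inter> T)"
  by (simp add: add_subgroup_def)

lemma coset_eq_iff:
  assumes S: "add_subgroup S"
  shows "coset (+) x S = coset (+) y S \<longleftrightarrow> x - y \<in> S"
proof
  assume "coset (+) x S = coset (+) y S"
  moreover have "x \<in> coset (+) x S" using add_subgroupD(1)[OF S] unfolding mem_coset by force
  ultimately have "x \<in> coset (+) y S" by simp
  then obtain t where "t \<in> S" "x = y + t" unfolding mem_coset by blast
  then show "x - y \<in> S" by simp
next
  have sub: "coset (+) a S \<subseteq> coset (+) b S" if "a - b \<in> S" for a b
  proof
    fix z assume "z \<in> coset (+) a S"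
    then obtain t where "t \<in> S" "z = b + ((a - b) + t)" unfolding mem_coset by force
    with add_subgroupD(2)[OF S] that show "z \<in> coset (+) b S" unfolding mem_coset by blast
  qed
  assume "x - y \<in> S"
  moreover from add_subgroupD(3)[OF S this] have "y - x \<in> S" by simp
  ultimately show "coset (+) x S = coset (+) y S" using sub by blast
qed

lemma setplus_coset:
  assumes P: "add_subgroup P"
  shows "setplus (+) (coset (+) x P) (coset (+) y P) = coset (+) (x + y) P"
proof (rule set_eqI)
  fix z
  show "z \<in> setplus (+) (coset (+) x P) (coset (+) y P) \<longleftrightarrow> z \<in> coset (+) (x + y) P"
  proof
    assume "z \<in> setplus (+) (coset (+) x P) (coset (+) y P)"
    then obtain p q where "p \<in> coset (+) x P" "q \<in> coset (+) y P" "z = p + q"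
      unfolding mem_setplus by blast
    then obtain t t' where "t \<in> P" "t' \<in> P" "z = (x + y) + (t + t')"
      unfolding mem_coset by (auto simp: algebra_simps)
    then show "z \<in> coset (+) (x + y) P" unfolding mem_coset using add_subgroupD(2)[OF P] by blast
  next
    assume "z \<in> coset (+) (x + y) P"
    then obtain t where "t \<in> P" "z = (x + t) + (y + 0)" unfolding mem_coset by (auto simp: algebra_simps)
    moreover from this have "x + t \<in> coset (+) x P" "y + 0 \<in> coset (+) y P"
      unfolding mem_coset using add_subgroupD(1)[OF P] by blast+
    ultimately show "z \<in> setplus (+) (coset (+) x P) (coset (+) y P)"
      unfolding mem_setplus by blast
  qed
qed

lemma gspan_coset_image:
  assumes P: "add_subgroup P"
  shows "gspan (setplus (+)) P ((\<lambda>x. coset (+) x P) ` G) = (\<lambda>x. coset (+) x P) ` gspan (+) 0 G"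
proof
  show "gspan (setplus (+)) P ((\<lambda>x. coset (+) x P) ` G) \<subseteq> (\<lambda>x. coset (+) x P) ` gspan (+) 0 G"
  proof (rule gspan_subset)
    show "P \<in> (\<lambda>x. coset (+) x P) ` gspan (+) 0 G"
      using coset_zero[of P] gspan.gspan_zero by (metis image_eqI)
    show "setplus (+) X Y \<in> (\<lambda>x. coset (+) x P) ` gspan (+) 0 G"
      if "X \<in> (\<lambda>x. coset (+) x P) ` gspan (+) 0 G" "Y \<in> (\<lambda>x. coset (+) x P) ` gspan (+) 0 G" for X Y
    proof -
      from that obtain x y where "x \<in> gspan (+) 0 G" "y \<in> gspan (+) 0 G"
        and "X = coset (+) x P" "Y = coset (+) y P" by blast
      then show ?thesis by (simp add: setplus_coset[OF P] gspan.gspan_plus)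
    qed
  qed (blast intro: gspan.gspan_gen)
  show "(\<lambda>x. coset (+) x P) ` gspan (+) 0 G \<subseteq> gspan (setplus (+)) P ((\<lambda>x. coset (+) x P) ` G)"
  proof clarify
    fix x assume "x \<in> gspan (+) 0 G"
    then show "coset (+) x P \<in> gspan (setplus (+)) P ((\<lambda>x. coset (+) x P) ` G)"
    proof induct
      case (gspan_plus x y)
      show ?case unfolding setplus_coset[OF P, symmetric] by (rule gspan.gspan_plus[OF gspan_plus(2,4)])
    qed (simp_all add: coset_zero gspan.gspan_zero gspan.gspan_gen)
  qed
qed

lemma coset_image_Int:
  assumes P: "add_subgroup P"
  shows "(\<lambda>x. coset (+) x P) ` N \<inter> (\<lambda>x. coset (+) x P) ` R = (\<lambda>x. coset (+) x P) ` (N \<inter> setplus (+) R P)"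
proof -
  have "coset (+) x P \<in> (\<lambda>x. coset (+) x P) ` R \<longleftrightarrow> x \<in> setplus (+) R P" for x
    unfolding coset_eq_iff[OF P] image_iff mem_setplus
    by (metis add_diff_cancel_left' diff_add_cancel add.commute)
  then show ?thesis by blast
qed

lemma coset_coset_image:
  assumes P: "add_subgroup P"
  shows "coset (setplus (+)) (coset (+) x P) ((\<lambda>x. coset (+) x P) ` W) = (\<lambda>x. coset (+) x P) ` coset (+) x W"
proof -
  have "coset (setplus (+)) (coset (+) x P) ((\<lambda>x. coset (+) x P) ` W)
      = setplus (+) (coset (+) x P) ` (\<lambda>x. coset (+) x P) ` W"
    by (rule coset_eq_image)
  also have "\<dots> = (\<lambda>w. coset (+) (x + w) P) ` W" by (simp add: image_image setplus_coset[OF P])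
  also have "\<dots> = (\<lambda>x. coset (+) x P) ` coset (+) x W" by (simp add: coset_eq_image image_image)
  finally show ?thesis .
qed

lemma coset_image_eq_iff:
  assumes P: "add_subgroup P" and V: "add_subgroup V" and PV: "P \<subseteq> V"
    and N: "add_subgroup N" and x: "x \<in> N" and y: "y \<in> N"
  shows "(\<lambda>x. coset (+) x P) ` coset (+) x (N \<inter> V) = (\<lambda>x. coset (+) x P) ` coset (+) y (N \<inter> V)
    \<longleftrightarrow> x - y \<in> N \<inter> V"
proof
  assume "(\<lambda>x. coset (+) x P) ` coset (+) x (N \<inter> V) = (\<lambda>x. coset (+) x P) ` coset (+) y (N \<inter> V)"
  moreover have "x \<in> coset (+) x (N \<inter> V)"
    using add_subgroupD(1)[OF N] add_subgroupD(1)[OF V] unfolding mem_coset by force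
  ultimately have "coset (+) x P \<in> (\<lambda>x. coset (+) x P) ` coset (+) y (N \<inter> V)"
    by (metis image_eqI)
  then obtain z where "z \<in> coset (+) y (N \<inter> V)" "coset (+) x P = coset (+) z P" by (rule imageE) simp
  then obtain w where w: "w \<in> N \<inter> V" "coset (+) x P = coset (+) (y + w) P"
    unfolding mem_coset by blast
  then have "x - (y + w) \<in> V" using coset_eq_iff[OF P] PV by blast
  then have "x - (y + w) + w \<in> V" using w add_subgroupD(2)[OF V] by blast
  then show "x - y \<in> N \<inter> V" using add_subgroup_diff[OF N x y] by (simp add: algebra_simps)
next
  assume "x - y \<in> N \<inter> V"
  then have "coset (+) x (N \<inter> V) = coset (+) y (N \<inter> V)"
    using coset_eq_iff[OF add_subgroup_Int[OF N V]] by blast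
  then show "(\<lambda>x. coset (+) x P) ` coset (+) x (N \<inter> V) = (\<lambda>x. coset (+) x P) ` coset (+) y (N \<inter> V)"
    by simp
qed

section \<open>Purity\<close>

lemma pure_in_restrict_carrier:
  assumes "pure_in sm M D" "D \<subseteq> M" "X \<subseteq> D"
  shows "pure_in sm D X \<longleftrightarrow> pure_in sm M X"
  using assms unfolding pure_in_def by blast

text \<open>\<open>phi\<close> plays the role of the quotient map \<open>M \<rightarrow> M/W\<close>, and \<open>phi ` D\<close> that of the
  quotient module in which purity is tested.\<close>

lemma cyclic_image_nonzero_pure_iff:
  fixes sm :: "'c::{zero,one} \<Rightarrow> 'm::ab_group_add \<Rightarrow> 'm" and phi :: "'m \<Rightarrow> 'q"
  assumes M0: "0 \<in> M" and Msm: "\<And>c x. x \<in> M \<Longrightarrow> sm c x \<in> M"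
    and Wsm: "\<And>c x. x \<in> W \<Longrightarrow> sm c x \<in> W"
    and phi: "\<And>x y. x \<in> M \<Longrightarrow> y \<in> M \<Longrightarrow> phi x = phi y \<longleftrightarrow> x - y \<in> W"
    and DM: "D \<subseteq> M" and F: "\<And>c x. x \<in> D \<Longrightarrow> F c (phi x) = phi (sm c x)"
    and v: "v \<in> M" and sm1: "sm 1 v = v"
  shows "({phi (sm c v) | c. True} \<noteq> {phi 0} \<and> pure_in F (phi ` D) {phi (sm c v) | c. True})
     \<longleftrightarrow> v \<notin> W \<and> pure_in sm D (setplus (+) {sm c v | c. True} W)"
proof -
  let ?img = "{phi (sm c v) | c. True}"
  let ?Ov_W = "setplus (+) {sm c v | c. True} W"
  have key: "phi y \<in> ?img \<longleftrightarrow> y \<in> ?Ov_W" if "y \<in> M" for y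
  proof -
    have "phi y = phi (sm c v) \<longleftrightarrow> (\<exists>w\<in>W. y = sm c v + w)" for c
      using phi[OF that Msm[OF v]] by (metis add_diff_cancel_left' diff_add_cancel add.commute)
    then show ?thesis unfolding mem_setplus by blast
  qed
  have "?img \<noteq> {phi 0} \<longleftrightarrow> v \<notin> W"
  proof
    assume "v \<notin> W"
    then have "phi (sm 1 v) \<noteq> phi 0" using phi[OF v M0] sm1 by simp
    then show "?img \<noteq> {phi 0}" by blast
  next
    assume ne: "?img \<noteq> {phi 0}"
    show "v \<notin> W"
    proof
      assume "v \<in> W"
      then have "?img = {phi 0}" using phi[OF Msm[OF v] M0] Wsm by auto
      with ne show False ..
    qed
  qed
  moreover have "pure_in F (phi ` D) ?img \<longleftrightarrow> pure_in sm D ?Ov_W"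
  proof -
    have "F c (phi x) \<in> ?img \<longleftrightarrow> sm c x \<in> ?Ov_W" "phi x \<in> ?img \<longleftrightarrow> x \<in> ?Ov_W"
      if "x \<in> D" for c x
      using F[OF that] key[OF Msm] key that DM by (simp_all add: subsetD)
    then show ?thesis unfolding pure_in_def by auto
  qed
  ultimately show ?thesis by simp
qed

section \<open>Lattices in modules over \<open>A\<^sub>K\<close>\<close>

lemma ofO_mult: "ofO (a * b) = ofO a * ofO b"
  by (simp add: ofO_def)

lemma ofO_diff: "ofO (a - b) = ofO a - ofO b"
  by (simp add: ofO_def)

lemma ofO_1: "ofO 1 = 1"
  by (simp add: ofO_def One_fract_def)

lemma O_order_scalar_mem:
  assumes "K_algebra kap" and "O_order kap A"
  shows "kap (ofO c) \<in> A"
proof -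
  have kap_mult: "\<And>x y. kap (x * y) = kap x * kap y" using assms(1) unfolding K_algebra_def by blast
  from assms(2) obtain b where A: "A = {\<Sum>i<length b. kap (ofO (os ! i)) * b ! i | os. length os = length b}"
    and "1 \<in> A" unfolding O_order_def by blast
  then obtain os where os: "length os = length b" "1 = (\<Sum>i<length b. kap (ofO (os ! i)) * b ! i)"
    by blast
  have "kap (ofO c) = (\<Sum>i<length b. kap (ofO c) * (kap (ofO (os ! i)) * b ! i))"
    by (subst mult_1_right[symmetric], subst os(2)) (simp add: sum_distrib_left)
  also have "\<dots> = (\<Sum>i<length b. kap (ofO (map ((*) c) os ! i)) * b ! i)"
    by (rule sum.cong) (auto simp: os(1) ofO_mult kap_mult mult.assoc)
  finally show ?thesis unfolding A using os(1) by (metis (mono_tags) length_map mem_Collect_eq)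
qed

lemma jac_mult_left: "x \<in> jac UNIV \<Longrightarrow> r * x \<in> jac UNIV"
  by (auto simp: jac_def max_left_ideal_def left_ideal_def)

locale O_submodule =
  fixes kap :: "'o::idom fract \<Rightarrow> 'a::ring_1" and act :: "'a \<Rightarrow> 'm::ab_group_add \<Rightarrow> 'm"
    and VK N :: "'m set"
  assumes K_algebra: "K_algebra kap" and module_VK: "is_module UNIV act VK" and N_subset: "N \<subseteq> VK"
    and N_subgroup: "add_subgroup N" and N_smO: "\<And>x c. x \<in> N \<Longrightarrow> smO kap act c x \<in> N"
begin

abbreviation KA_submodule :: "'m set \<Rightarrow> bool" where
  "KA_submodule P \<equiv> is_submodule UNIV act VK P"

lemma kap_mult: "kap (x * y) = kap x * kap y"
  using K_algebra unfolding K_algebra_def by blast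

lemma kap_1: "kap 1 = 1"
  using K_algebra unfolding K_algebra_def by blast

lemma kap_diff: "kap (x - y) = kap x - kap y"
  using K_algebra unfolding K_algebra_def by (metis add_diff_cancel diff_add_cancel)

lemma VK_zero: "0 \<in> VK" and VK_add: "x \<in> VK \<Longrightarrow> y \<in> VK \<Longrightarrow> x + y \<in> VK"
  and VK_act: "x \<in> VK \<Longrightarrow> act a x \<in> VK"
  and act_add: "x \<in> VK \<Longrightarrow> y \<in> VK \<Longrightarrow> act a (x + y) = act a x + act a y"
  and act_add_left: "x \<in> VK \<Longrightarrow> act (a + b) x = act a x + act b x"
  and act_mult: "x \<in> VK \<Longrightarrow> act (a * b) x = act a (act b x)"
  and act_1: "x \<in> VK \<Longrightarrow> act 1 x = x"
  using module_VK by (simp_all add: is_module_def)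

lemma act_zero: "act a 0 = 0"
  using act_add[OF VK_zero VK_zero, of a] by simp

lemma act_diff_left: "x \<in> VK \<Longrightarrow> act (a - b) x = act a x - act b x"
  using act_add_left[of x "a - b" b] by (simp add: algebra_simps)

lemma act_minus_1: "x \<in> VK \<Longrightarrow> act (- 1) x = - x"
  using act_diff_left[of x 0 1] act_add_left[of x 0 0] by (simp add: act_1)

lemma smO_eq: "smO kap act c = act (kap (ofO c))"
  by (rule ext) (simp add: smO_def)

lemma smO_1: "x \<in> VK \<Longrightarrow> smO kap act 1 x = x"
  by (simp add: smO_eq ofO_1 kap_1 act_1)

lemma smO_VK: "x \<in> VK \<Longrightarrow> smO kap act c x \<in> VK"
  by (simp add: smO_eq VK_act)

lemma smO_add: "x \<in> VK \<Longrightarrow> y \<in> VK \<Longrightarrow> smO kap act c (x + y) = smO kap act c x + smO kap act c y"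
  by (simp add: smO_eq act_add)

lemma smO_smO: "x \<in> VK \<Longrightarrow> smO kap act c (smO kap act d x) = smO kap act (c * d) x"
  by (simp add: smO_eq act_mult ofO_mult kap_mult)

lemma smO_diff_left: "x \<in> VK \<Longrightarrow> smO kap act (c - d) x = smO kap act c x - smO kap act d x"
  by (simp add: smO_eq ofO_diff kap_diff act_diff_left)

lemma smO_cancel: assumes "x \<in> VK" "c \<noteq> 0"
  shows "act (kap (Fract 1 c)) (smO kap act c x) = x"
proof -
  have "Fract 1 c * ofO c = 1" using assms(2) by (simp add: ofO_def One_fract_def eq_fract)
  then show ?thesis using assms(1) by (simp add: smO_eq act_mult[symmetric] kap_mult[symmetric] kap_1 act_1)
qed

lemma KA_submoduleD:
  assumes "KA_submodule P"
  shows "P \<subseteq> VK" "0 \<in> P" "\<And>x y. x \<in> P \<Longrightarrow> y \<in> P \<Longrightarrow> x + y \<in> P"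
    "\<And>x. x \<in> P \<Longrightarrow> - x \<in> P" "\<And>a x. x \<in> P \<Longrightarrow> act a x \<in> P"
  using assms by (auto simp: is_submodule_def)

lemma KA_submodule_diff: "KA_submodule P \<Longrightarrow> x \<in> P \<Longrightarrow> y \<in> P \<Longrightarrow> x - y \<in> P"
  using KA_submoduleD(3,4)[of P] by (metis diff_conv_add_uminus)

lemma KA_submodule_smO: "KA_submodule P \<Longrightarrow> x \<in> P \<Longrightarrow> smO kap act c x \<in> P"
  by (simp add: smO_eq KA_submoduleD(5))

lemma KA_submodule_smO_cancel:
  assumes "KA_submodule P" "x \<in> VK" "c \<noteq> 0" "smO kap act c x \<in> P"
  shows "x \<in> P"
  using KA_submoduleD(5)[OF assms(1,4), of "kap (Fract 1 c)"] smO_cancel[OF assms(2,3)] by simp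

lemma pure_in_Int_KA_submodule: "KA_submodule P \<Longrightarrow> pure_in (smO kap act) N (N \<inter> P)"
  unfolding pure_in_def using KA_submodule_smO_cancel N_subset by blast

lemma KA_submodule_gspan:
  assumes G: "G \<subseteq> VK" and G_act: "\<And>a g. g \<in> G \<Longrightarrow> act a g \<in> G"
  shows "KA_submodule (gspan (+) 0 G)"
proof -
  have VK: "x \<in> VK" if "x \<in> gspan (+) 0 G" for x
    using that by induct (use G VK_zero VK_add in auto)
  have act: "act a x \<in> gspan (+) 0 G" if "x \<in> gspan (+) 0 G" for x a
    using that
  proof induct
    case (gspan_plus x y)
    then show ?case using VK act_add by (metis gspan.gspan_plus)
  qed (auto simp: act_zero G_act intro: gspan.intros)
  show ?thesis
    unfolding is_submodule_def using VK act act_minus_1 by (metis gspan.intros subsetI)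
qed

lemma KA_submodule_VK: "KA_submodule VK"
  unfolding is_submodule_def using VK_zero VK_add VK_act act_minus_1 by (metis subset_refl)

lemma radK_Suc: "radK act VK (Suc i) = gspan (+) 0 {act j m |j m. j \<in> jac UNIV \<and> m \<in> radK act VK i}"
  by (simp add: radK_def)

lemma KA_submodule_radK: "KA_submodule (radK act VK i)"
proof (induct i)
  case 0
  then show ?case by (simp add: radK_def KA_submodule_VK)
next
  case (Suc i)
  note R = KA_submoduleD[OF Suc]
  show ?case unfolding radK_Suc
  proof (rule KA_submodule_gspan)
    show "{act j m |j m. j \<in> jac UNIV \<and> m \<in> radK act VK i} \<subseteq> VK"
      using R(1) VK_act by auto
    fix a g assume "g \<in> {act j m |j m. j \<in> jac UNIV \<and> m \<in> radK act VK i}"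
    then obtain j m where "g = act j m" "j \<in> jac UNIV" "m \<in> radK act VK i" by blast
    moreover have "act a g = act (a * j) m" using calculation R(1) by (simp add: act_mult subsetD)
    ultimately show "act a g \<in> {act j m |j m. j \<in> jac UNIV \<and> m \<in> radK act VK i}"
      using jac_mult_left by fastforce
  qed
qed

lemma radK_Suc_subset: "radK act VK (Suc i) \<subseteq> radK act VK i"
  unfolding radK_Suc using KA_submoduleD[OF KA_submodule_radK[of i]] by (intro gspan_subset) blast+

lemma KA_submodule_Nprime: "KA_submodule (Nprime e Lam le act VK lam)"
  unfolding Nprime_def
proof (rule KA_submodule_gspan)
  let ?G = "{act a w |a w. \<exists>\<mu>\<in>Lam. le lam \<mu> \<and> \<mu> \<noteq> lam \<and> w \<in> wsp act e VK \<mu>}"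
  show "?G \<subseteq> VK" by (auto simp: wsp_def VK_act)
  fix b g assume "g \<in> ?G"
  then obtain a w \<mu> where "g = act a w" "\<mu> \<in> Lam" "le lam \<mu>" "\<mu> \<noteq> lam" "w \<in> wsp act e VK \<mu>"
    by blast
  moreover have "w \<in> VK" using calculation(5) by (auto simp: wsp_def VK_act)
  ultimately have "act b g = act (b * a) w" "\<exists>\<mu>\<in>Lam. le lam \<mu> \<and> \<mu> \<noteq> lam \<and> w \<in> wsp act e VK \<mu>"
    using act_mult by auto
  then show "act b g \<in> ?G" by blast
qed

lemma KA_submodule_setplus:
  assumes P: "KA_submodule P" and Q: "KA_submodule Q"
  shows "KA_submodule (setplus (+) P Q)"
proof -
  note P' = KA_submoduleD[OF P] and Q' = KA_submoduleD[OF Q]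
  have "x + y \<in> setplus (+) P Q" if "x \<in> setplus (+) P Q" "y \<in> setplus (+) P Q" for x y
  proof -
    from that obtain p q p' q' where "p \<in> P" "q \<in> Q" "p' \<in> P" "q' \<in> Q" "x = p + q" "y = p' + q'"
      unfolding mem_setplus by blast
    moreover have "x + y = (p + p') + (q + q')" using calculation by (simp add: algebra_simps)
    ultimately show ?thesis unfolding mem_setplus using P'(3) Q'(3) by blast
  qed
  moreover have "- x \<in> setplus (+) P Q \<and> act a x \<in> setplus (+) P Q \<and> x \<in> VK"
    if "x \<in> setplus (+) P Q" for x a
  proof -
    from that obtain p q where pq: "p \<in> P" "q \<in> Q" "x = p + q" unfolding mem_setplus by blast
    then have "p \<in> VK" "q \<in> VK" using P'(1) Q'(1) by blast+
    then have "- x = - p + - q" "act a x = act a p + act a q" "x \<in> VK"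
      using pq act_add VK_add by simp_all
    then show ?thesis unfolding mem_setplus using pq P'(4,5) Q'(4,5) by blast
  qed
  moreover have "0 \<in> setplus (+) P Q" unfolding mem_setplus using P'(2) Q'(2) by force
  ultimately show ?thesis unfolding is_submodule_def by blast
qed

lemma add_subgroup_KA_submodule: "KA_submodule P \<Longrightarrow> add_subgroup P"
  by (simp add: add_subgroup_def is_submodule_def)

lemma qmap_coset:
  assumes S: "add_subgroup S" "S \<subseteq> VK" "\<And>x. x \<in> S \<Longrightarrow> act a x \<in> S" and x: "x \<in> VK"
  shows "qmap (+) S (act a) (coset (+) x S) = coset (+) (act a x) S"
proof (rule set_eqI)
  note S' = add_subgroupD[OF S(1)]
  fix y
  show "y \<in> qmap (+) S (act a) (coset (+) x S) \<longleftrightarrow> y \<in> coset (+) (act a x) S"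
  proof
    assume "y \<in> qmap (+) S (act a) (coset (+) x S)"
    then obtain c t where "c \<in> coset (+) x S" "t \<in> S" "y = act a c + t" unfolding mem_qmap by blast
    then obtain s where "s \<in> S" "t \<in> S" "y = act a (x + s) + t" unfolding mem_coset by blast
    moreover from this have "y = act a x + (act a s + t)" using S(2) x act_add by (auto simp: add.assoc)
    ultimately show "y \<in> coset (+) (act a x) S" unfolding mem_coset using S(3) S'(2) by blast
  next
    assume "y \<in> coset (+) (act a x) S"
    then obtain t where "t \<in> S" "y = act a (x + 0) + t" unfolding mem_coset by auto
    moreover have "x + 0 \<in> coset (+) x S" unfolding mem_coset using S'(1) by blast
    ultimately show "y \<in> qmap (+) S (act a) (coset (+) x S)" unfolding mem_qmap by blast
  qed
qed

lemma qmap_smO_coset: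
  assumes "add_subgroup S" "S \<subseteq> VK" "\<And>x. x \<in> S \<Longrightarrow> smO kap act c x \<in> S" "x \<in> VK"
  shows "qmap (+) S (smO kap act c) (coset (+) x S) = coset (+) (smO kap act c x) S"
  using qmap_coset[of S "kap (ofO c)" x] assms by (simp add: smO_eq)

lemma radpow_quotient:
  assumes P: "KA_submodule P"
  shows "radpow (setplus (+)) P (\<lambda>a. qmap (+) P (act a)) (jac UNIV) (quot (+) VK P) j
     = (\<lambda>x. coset (+) x P) ` radK act VK j"
proof (induct j)
  case 0
  show ?case by (simp add: radK_def quot_def)
next
  case (Suc j)
  let ?\<pi> = "\<lambda>x. coset (+) x P"
  have act_coset: "qmap (+) P (act a) (?\<pi> m) = ?\<pi> (act a m)" if "m \<in> radK act VK j" for a m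
    using qmap_coset[OF add_subgroup_KA_submodule[OF P] KA_submoduleD(1,5)[OF P]]
      KA_submoduleD(1)[OF KA_submodule_radK] that by blast
  have "{qmap (+) P (act a) C | a C. a \<in> jac UNIV \<and> C \<in> ?\<pi> ` radK act VK j}
      = ?\<pi> ` {act a m | a m. a \<in> jac UNIV \<and> m \<in> radK act VK j}"
    using act_coset by blast
  then show ?case
    using Suc gspan_coset_image[OF add_subgroup_KA_submodule[OF P]] by (simp add: radK_def)
qed

lemma quotient_radical_trace:
  assumes P: "KA_submodule P"
  shows "quot (+) N P \<inter> radpow (setplus (+)) P (\<lambda>a. qmap (+) P (act a)) (jac UNIV) (quot (+) VK P) j
      = (\<lambda>x. coset (+) x P) ` (N \<inter> setplus (+) (radK act VK j) P)"
proof -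
  have "quot (+) N P = (\<lambda>x. coset (+) x P) ` N" by (simp add: quot_def)
  then show ?thesis
    unfolding radpow_quotient[OF P] by (simp add: coset_image_Int[OF add_subgroup_KA_submodule[OF P]])
qed

lemma qmap_coset_image:
  assumes P: "KA_submodule P" and W: "add_subgroup W" "W \<subseteq> VK" "\<And>x. x \<in> W \<Longrightarrow> act a x \<in> W"
    and x: "x \<in> VK"
  shows "qmap (setplus (+)) ((\<lambda>x. coset (+) x P) ` W) (qmap (+) P (act a)) ((\<lambda>x. coset (+) x P) ` coset (+) x W)
     = (\<lambda>x. coset (+) x P) ` coset (+) (act a x) W"
proof -
  let ?\<pi> = "\<lambda>x. coset (+) x P"
  note P' = add_subgroup_KA_submodule[OF P] KA_submoduleD[OF P] and W' = add_subgroupD[OF W(1)]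
  have VK: "x + w \<in> VK" if "w \<in> W" for w using that W(2) x VK_add by blast
  have "qmap (setplus (+)) (?\<pi> ` W) (qmap (+) P (act a)) (?\<pi> ` coset (+) x W)
      = {setplus (+) (qmap (+) P (act a) (?\<pi> (x + w))) (?\<pi> w') | w w'. w \<in> W \<and> w' \<in> W}"
    unfolding qmap_def coset_def by blast
  also have "\<dots> = {?\<pi> (act a x + (act a w + w')) | w w'. w \<in> W \<and> w' \<in> W}"
  proof -
    have "setplus (+) (qmap (+) P (act a) (?\<pi> (x + w))) (?\<pi> w') = ?\<pi> (act a x + (act a w + w'))"
      if "w \<in> W" for w w'
      using qmap_coset[OF P'(1,2,6) VK[OF that]] setplus_coset[OF P'(1)] act_add[OF x] W(2) that
      by (simp add: add.assoc subset_iff)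
    then show ?thesis by blast
  qed
  also have "\<dots> = (\<lambda>u. ?\<pi> (act a x + u)) ` {act a w + w' | w w'. w \<in> W \<and> w' \<in> W}"
    by blast
  also have "{act a w + w' | w w'. w \<in> W \<and> w' \<in> W} = W"
  proof
    show "W \<subseteq> {act a w + w' | w w'. w \<in> W \<and> w' \<in> W}"
      using W'(1) act_zero by (metis (mono_tags, lifting) add_0 mem_Collect_eq subsetI)
  qed (use W(3) W'(2) in blast)
  also have "(\<lambda>u. ?\<pi> (act a x + u)) ` W = ?\<pi> ` coset (+) (act a x) W"
    by (simp add: coset_eq_image image_image)
  finally show ?thesis .
qed

lemma primitive_iff:
  assumes v: "v \<in> N"
  shows "primitive kap e Lam le act VK N lam v \<longleftrightarrow> v \<in> wsp act e N lam \<and>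
     v \<notin> N \<inter> Nprime e Lam le act VK lam \<and>
     pure_in (smO kap act) N (setplus (+) {smO kap act c v | c. True} (N \<inter> Nprime e Lam le act VK lam))"
proof -
  let ?S = "N \<inter> Nprime e Lam le act VK lam"
  have S: "add_subgroup ?S" "?S \<subseteq> VK"
    using add_subgroup_Int[OF N_subgroup add_subgroup_KA_submodule[OF KA_submodule_Nprime[of e Lam le lam]]]
      N_subset by blast+
  have S_smO: "smO kap act c x \<in> ?S" if "x \<in> ?S" for c x
    using that N_smO KA_submodule_smO[OF KA_submodule_Nprime[of e Lam le lam]] by blast
  have "({coset (+) (smO kap act c v) ?S | c. True} \<noteq> {coset (+) 0 ?S} \<and>
      pure_in (\<lambda>c. qmap (+) ?S (smO kap act c)) ((\<lambda>x. coset (+) x ?S) ` N)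
        {coset (+) (smO kap act c v) ?S | c. True})
    \<longleftrightarrow> v \<notin> ?S \<and> pure_in (smO kap act) N (setplus (+) {smO kap act c v | c. True} ?S)"
  proof (rule cyclic_image_nonzero_pure_iff)
    show "qmap (+) ?S (smO kap act c) (coset (+) x ?S) = coset (+) (smO kap act c x) ?S"
      if "x \<in> N" for c x
      using qmap_smO_coset[OF S S_smO] that N_subset by blast
  qed (use add_subgroupD(1)[OF N_subgroup] N_smO S_smO coset_eq_iff[OF S(1)] v smO_1 N_subset in auto)
  then show ?thesis unfolding primitive_def Let_def quot_def by simp
qed

lemma cyclic_sum_subset_radical_trace:
  assumes P: "KA_submodule P" and v: "v \<in> N" "v \<in> radK act VK i"
  shows "setplus (+) {smO kap act c v | c. True} (N \<inter> setplus (+) (radK act VK (Suc i)) P)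
    \<subseteq> N \<inter> setplus (+) (radK act VK i) P"
proof -
  let ?V = "setplus (+) (radK act VK i) P"
  have V: "KA_submodule ?V" by (rule KA_submodule_setplus[OF KA_submodule_radK P])
  have "v \<in> ?V" unfolding setplus_def using v KA_submoduleD(2)[OF P] by force
  then have "smO kap act c v \<in> N \<inter> ?V" for c using v N_smO KA_submodule_smO[OF V] by blast
  moreover have "setplus (+) (radK act VK (Suc i)) P \<subseteq> ?V"
    unfolding setplus_def using radK_Suc_subset by blast
  moreover note add_subgroupD(2)[OF add_subgroup_Int[OF N_subgroup add_subgroup_KA_submodule[OF V]]]
  ultimately show ?thesis unfolding setplus_def by blast
qed

text \<open>The image of \<open>\<O>v\<close> in the \<open>i\<close>-th graded piece of \<open>N/(N \<inter> P)\<close>, computed inside \<open>N\<^sub>K/P\<close>.\<close>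

lemma graded_cyclic_image_nonzero_pure_iff:
  assumes P: "KA_submodule P" and v: "v \<in> N" "v \<in> radK act VK i"
  defines "W \<equiv> \<lambda>j. N \<inter> setplus (+) (radK act VK j) P" and "\<pi> \<equiv> \<lambda>x. coset (+) x P"
  shows "({coset (setplus (+)) (\<pi> (smO kap act c v)) (\<pi> ` W (Suc i)) | c. True}
            \<noteq> {coset (setplus (+)) P (\<pi> ` W (Suc i))} \<and>
          pure_in (\<lambda>c. qmap (setplus (+)) (\<pi> ` W (Suc i)) (qmap (+) P (smO kap act c)))
            (quot (setplus (+)) (\<pi> ` W i) (\<pi> ` W (Suc i)))
            {coset (setplus (+)) (\<pi> (smO kap act c v)) (\<pi> ` W (Suc i)) | c. True})
     \<longleftrightarrow> v \<notin> W (Suc i) \<and> pure_in (smO kap act) N (setplus (+) {smO kap act c v | c. True} (W (Suc i)))"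
    (is "?image_nonzero_pure \<longleftrightarrow> _")
proof -
  have V: "KA_submodule (setplus (+) (radK act VK j) P)" for j
    by (rule KA_submodule_setplus[OF KA_submodule_radK P])
  note P' = add_subgroup_KA_submodule[OF P] and V' = add_subgroup_KA_submodule[OF V]
  have W: "add_subgroup (W j)" "W j \<subseteq> VK" for j
    unfolding W_def using add_subgroup_Int[OF N_subgroup V'] N_subset by blast+
  have W_smO: "smO kap act c x \<in> W j" if "x \<in> W j" for c x j
    using that N_smO KA_submodule_smO[OF V] unfolding W_def by blast
  have P_V: "P \<subseteq> setplus (+) (radK act VK (Suc i)) P"
    by (rule subset_setplus_zero[OF KA_submoduleD(2)[OF KA_submodule_radK]])
  have coset_W: "coset (setplus (+)) (\<pi> x) (\<pi> ` W (Suc i)) = \<pi> ` coset (+) x (W (Suc i))" for x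
    unfolding \<pi>_def by (rule coset_coset_image[OF P'])
  have coset_zero_W: "coset (setplus (+)) P (\<pi> ` W (Suc i)) = \<pi> ` coset (+) 0 (W (Suc i))"
    using coset_W[of 0] by (simp only: \<pi>_def coset_zero)
  have "?image_nonzero_pure \<longleftrightarrow> v \<notin> W (Suc i) \<and> pure_in (smO kap act) (W i) (setplus (+) {smO kap act c v | c. True} (W (Suc i)))"
    unfolding coset_W coset_zero_W quot_def image_image
  proof (rule cyclic_image_nonzero_pure_iff)
    show "\<pi> ` coset (+) x (W (Suc i)) = \<pi> ` coset (+) y (W (Suc i)) \<longleftrightarrow> x - y \<in> W (Suc i)"
      if "x \<in> N" "y \<in> N" for x y
      unfolding \<pi>_def W_def by (rule coset_image_eq_iff[OF P' V' P_V N_subgroup that])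
    show "qmap (setplus (+)) (\<pi> ` W (Suc i)) (qmap (+) P (smO kap act c)) (\<pi> ` coset (+) x (W (Suc i)))
        = \<pi> ` coset (+) (smO kap act c x) (W (Suc i))" if "x \<in> W i" for c x
      using qmap_coset_image[OF P W(1,2) W_smO[unfolded smO_eq]] that W(2) unfolding \<pi>_def smO_eq by blast
  qed (use add_subgroupD(1)[OF N_subgroup] N_smO W_smO v(1) smO_1 N_subset W_def in auto)
  also have "\<dots> \<longleftrightarrow> v \<notin> W (Suc i) \<and> pure_in (smO kap act) N (setplus (+) {smO kap act c v | c. True} (W (Suc i)))"
    using pure_in_restrict_carrier[OF _ _ cyclic_sum_subset_radical_trace[OF P v]]
      pure_in_Int_KA_submodule[OF V] unfolding W_def by blast
  finally show ?thesis .
qed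

lemma strongly_primitive_iff:
  assumes v: "v \<in> N"
  shows "strongly_primitive kap e Lam le act VK N lam v \<longleftrightarrow> v \<in> wsp act e N lam \<and>
     (\<exists>i. v \<in> N \<inter> radK act VK i \<and>
        v \<notin> N \<inter> setplus (+) (radK act VK (Suc i)) (Nprime e Lam le act VK lam) \<and>
        pure_in (smO kap act) N (setplus (+) {smO kap act c v | c. True}
          (N \<inter> setplus (+) (radK act VK (Suc i)) (Nprime e Lam le act VK lam))))"
proof -
  let ?P = "Nprime e Lam le act VK lam"
  note P = KA_submodule_Nprime[of e Lam le lam]
  have smO_coset: "qmap (+) ?P (smO kap act c) (coset (+) v ?P) = coset (+) (smO kap act c v) ?P" for c
    using qmap_smO_coset[OF add_subgroup_KA_submodule[OF P] KA_submoduleD(1)[OF P] KA_submodule_smO[OF P]]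
      v N_subset by blast
  show ?thesis
    unfolding strongly_primitive_def Let_def quotient_radical_trace[OF P] smO_coset
    by (intro conj_cong[OF refl] ex_cong1) (erule IntE, erule (1) graded_cyclic_image_nonzero_pure_iff[OF P])
qed

lemma pure_cyclic_sum_shrink:
  assumes P: "KA_submodule P" and V: "KA_submodule V" and P_V: "P \<subseteq> V" and v: "v \<in> N" "v \<notin> V"
    and pure: "pure_in (smO kap act) N (setplus (+) {smO kap act c v | c. True} (N \<inter> V))"
  shows "pure_in (smO kap act) N (setplus (+) {smO kap act c v | c. True} (N \<inter> P))"
  unfolding pure_in_def
proof (intro allI impI ballI)
  fix c x assume c: "c \<noteq> 0" and x: "x \<in> N"
    and "smO kap act c x \<in> setplus (+) {smO kap act c v | c. True} (N \<inter> P)"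
  then obtain d' s where s: "s \<in> N \<inter> P" and cx: "smO kap act c x = smO kap act d' v + s"
    unfolding mem_setplus by blast
  then have "smO kap act c x \<in> setplus (+) {smO kap act c v | c. True} (N \<inter> V)"
    unfolding mem_setplus using P_V by blast
  with pure c x obtain d w where w: "w \<in> N \<inter> V" and xw: "x = smO kap act d v + w"
    unfolding pure_in_def mem_setplus by blast
  have vVK: "v \<in> VK" and wVK: "w \<in> VK" using v(1) w N_subset by blast+
  have cx': "smO kap act c x = smO kap act (c * d) v + smO kap act c w"
    using xw smO_add[OF smO_VK[OF vVK] wVK] smO_smO[OF vVK] by simp
  then have "smO kap act (c * d - d') v = s - smO kap act c w"
    using cx by (simp add: smO_diff_left[OF vVK] algebra_simps)
  also have "\<dots> \<in> V"
    using s P_V w KA_submodule_diff[OF V] KA_submodule_smO[OF V] by blast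
  finally have "c * d = d'"
    using KA_submodule_smO_cancel[OF V vVK] v(2) by (metis eq_iff_diff_eq_0)
  with cx cx' have "smO kap act c w = s" by simp
  then have "w \<in> N \<inter> P" using KA_submodule_smO_cancel[OF P wVK c] s w by simp
  then show "x \<in> setplus (+) {smO kap act c v | c. True} (N \<inter> P)"
    unfolding mem_setplus using xw by blast
qed


lemma strongly_primitive_imp_primitive:
  assumes v: "v \<in> N" and sp: "strongly_primitive kap e Lam le act VK N lam v"
  shows "primitive kap e Lam le act VK N lam v"
proof -
  let ?P = "Nprime e Lam le act VK lam"
  note P = KA_submodule_Nprime[of e Lam le lam]
  from sp obtain i where wsp: "v \<in> wsp act e N lam"
    and notin: "v \<notin> N \<inter> setplus (+) (radK act VK (Suc i)) ?P"
    and pure: "pure_in (smO kap act) N (setplus (+) {smO kap act c v | c. True}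
                 (N \<inter> setplus (+) (radK act VK (Suc i)) ?P))"
    unfolding strongly_primitive_iff[OF v] by blast
  have P_V: "?P \<subseteq> setplus (+) (radK act VK (Suc i)) ?P"
    by (rule subset_setplus_zero[OF KA_submoduleD(2)[OF KA_submodule_radK]])
  have "pure_in (smO kap act) N (setplus (+) {smO kap act c v | c. True} (N \<inter> ?P))"
    using pure_cyclic_sum_shrink[OF P KA_submodule_setplus[OF KA_submodule_radK P] P_V v _ pure] notin v
    by blast
  moreover have "v \<notin> N \<inter> ?P" using notin P_V by blast
  ultimately show ?thesis unfolding primitive_iff[OF v] using wsp by blast
qed

end

lemma A_lattice_O_submodule:
  assumes "K_algebra kap" "O_order kap A" "A_lattice kap A act VK N"
  shows "O_submodule kap act VK N"
proof -
  have lattice: "is_module UNIV act VK \<and> is_module A act N \<and> N \<subseteq> VK"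
    using assms(3) unfolding A_lattice_def by (elim conjE) (intro conjI)
  then have "smO kap act c x \<in> N" if "x \<in> N" for c x
    unfolding smO_def using O_order_scalar_mem[OF assms(1,2)] that by (auto simp: is_module_def)
  with assms(1) lattice show ?thesis
    by unfold_locales (auto simp: is_module_def add_subgroup_def)
qed

theorem proposition4p4:
  fixes kap :: "'o::idom fract \<Rightarrow> 'a::ring_1"
    and A :: "'a set" and X Lam :: "'x set" and e :: "'x \<Rightarrow> 'a" and le :: "'x \<Rightarrow> 'x \<Rightarrow> bool"
    and LK :: "'x \<Rightarrow> 'l1::ab_group_add set" and actK :: "'x \<Rightarrow> 'a \<Rightarrow> 'l1 \<Rightarrow> 'l1"
    and L :: "'x \<Rightarrow> 'l2::ab_group_add set" and actk :: "'x \<Rightarrow> 'a \<Rightarrow> 'l2 \<Rightarrow> 'l2"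
    and act :: "'a \<Rightarrow> 'm::ab_group_add \<Rightarrow> 'm" and VK N :: "'m set"
    and lam :: 'x and v :: 'm
  assumes "is_DVR TYPE('o)"
    and "std_weight_alg kap A X e Lam le LK actK L actk"
    and "A_lattice kap A act VK N"
    and "lam \<in> Lam" and "v \<in> wsp act e N lam"
  shows "(primitive kap e Lam le act VK N lam v \<longleftrightarrow>
            v \<notin> N \<inter> Nprime e Lam le act VK lam \<and>
            pure_in (smO kap act) N
              (setplus (+) {smO kap act c0 v | c0. True} (N \<inter> Nprime e Lam le act VK lam)))
       \<and> (strongly_primitive kap e Lam le act VK N lam v \<longleftrightarrow>
            (\<exists>i. v \<in> N \<inter> radK act VK i \<and>
                 v \<notin> N \<inter> setplus (+) (radK act VK (Suc i)) (Nprime e Lam le act VK lam) \<and>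
                 pure_in (smO kap act) N
                   (setplus (+) {smO kap act c0 v | c0. True}
                      (N \<inter> setplus (+) (radK act VK (Suc i)) (Nprime e Lam le act VK lam)))))
       \<and> (strongly_primitive kap e Lam le act VK N lam v \<longrightarrow> primitive kap e Lam le act VK N lam v)"
proof -
  have weight_alg: "K_algebra kap \<and> O_order kap A \<and> idem_decomp X e A \<and> Lam \<subseteq> X"
    using assms(2) unfolding std_weight_alg_def by (elim conjE) (intro conjI)
  interpret O_submodule kap act VK N
    using A_lattice_O_submodule weight_alg assms(3) by blast
  have "e lam \<in> A" using weight_alg assms(4) unfolding idem_decomp_def by blast
  moreover have "is_module A act N" using assms(3) unfolding A_lattice_def by (elim conjE)
  ultimately have v: "v \<in> N" using assms(5) unfolding is_module_def wsp_def by blast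
  show ?thesis
    using strongly_primitive_imp_primitive[where e = e and Lam = Lam and le = le and lam = lam, OF v]
    by (simp only: primitive_iff[OF v] strongly_primitive_iff[OF v] assms(5) simp_thms atomize_imp)
qed

end
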